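(* Let $G$ be the direct sum of $\omega$ copies of $\mathbb{Z}_2$, endowed with the topology $\tau$ induced from the Tikhonov product topology of $\mathbb{Z}_2^{\omega}$. Then $\operatorname{asdim}(G,\mathcal{C}_\tau)=\infty$.
   Context: $\mathcal{C}_\tau$ is the group ideal of precompact subsets (subsets with compact closure in $G$) of $(G,\tau)$; it defines the coarse structure on $G$ with base $\{\{(x,y):x\in A+y\}:A\in\mathcal{C}_\tau\}$. For an entourage $E$, $E[x]=\{y:(x,y)\in E\}$, $E[A]=\bigcup_{a\in A}E[a]$. $\operatorname{asdim}(X,\mathcal{E})\ge n$ means: for each $E\in\mathcal{E}$ there exist $F\in\mathcal{E}$ and a covering $\mathcal{M}$ of $X$ with each member contained in some $F[x]$, partitioned as $\mathcal{M}_0\cup\dots\cup\mathcal{M}_n$ with each $\mathcal{M}_i$ $E$-disjoint ($E[A]\cap E[B]=\emptyset$ for distinct $A,B\in\mathcal{M}_i$); $\operatorname{asdim}=\infty$ if this holds for every $n$. *)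

theory Defs
  imports "HOL-Analysis.Analysis"
begin

text \<open>The group G = direct sum of omega copies of Z_2: finitely supported
  sequences nat => bool, with pointwise addition mod 2 (xor).\<close>

definition Gsum :: "(nat \<Rightarrow> bool) set" where
  "Gsum = {x. finite {i. x i}}"

definition gadd :: "(nat \<Rightarrow> bool) \<Rightarrow> (nat \<Rightarrow> bool) \<Rightarrow> (nat \<Rightarrow> bool)" where
  "gadd x y = (\<lambda>i. x i \<noteq> y i)"

definition tau :: "(nat \<Rightarrow> bool) topology" where
  "tau = subtopology (product_topology (\<lambda>_::nat. discrete_topology (UNIV::bool set)) UNIV) Gsum"

definition precompact_tau :: "(nat \<Rightarrow> bool) set \<Rightarrow> bool" where
  "precompact_tau A \<longleftrightarrow> A \<subseteq> Gsum \<and> compactin tau (tau closure_of A)"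

definition coarse_C_tau :: "((nat \<Rightarrow> bool) \<times> (nat \<Rightarrow> bool)) set set" where
  "coarse_C_tau = {E. E \<subseteq> Gsum \<times> Gsum \<and>
      (\<exists>A. precompact_tau A \<and>
           E \<subseteq> {(x,y). x \<in> Gsum \<and> y \<in> Gsum \<and> x \<in> (\<lambda>a. gadd a y) ` A})}"

definition asdim_le :: "'a set \<Rightarrow> ('a \<times> 'a) set set \<Rightarrow> nat \<Rightarrow> bool" where
  "asdim_le X Ent n \<longleftrightarrow>
    (\<forall>E\<in>Ent. \<exists>F\<in>Ent. \<exists>\<M> (c :: 'a set \<Rightarrow> nat).
        \<Union>\<M> = X \<and>
        (\<forall>M\<in>\<M>. \<exists>x\<in>X. M \<subseteq> F `` {x}) \<and>
        (\<forall>M\<in>\<M>. c M \<le> n) \<and>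
        (\<forall>M\<in>\<M>. \<forall>M'\<in>\<M>. M \<noteq> M' \<and> c M = c M' \<longrightarrow> E `` M \<inter> E `` M' = {}))"

definition asdim_infinite :: "'a set \<Rightarrow> ('a \<times> 'a) set set \<Rightarrow> bool" where
  "asdim_infinite X Ent \<longleftrightarrow> (\<forall>n. \<not> asdim_le X Ent n)"

end

theory Submission
  imports Defs
begin

text \<open>The grid \<open>{0..p}\<^sup>N\<close> embeds into \<open>G\<close> by writing the \<open>i\<close>-th coordinate in unary on the
  \<open>i\<close>-th residue class mod \<open>N\<close>; grid points at \<open>\<ell>\<^sub>\<infinity>\<close>-distance at most 2 go to elements whose
  difference has at most \<open>2N\<close> nonzero coordinates, and these differences form a compact set.
  Conversely, a compact set of finitely supported sequences has, along each residue class,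
  common zeros below a uniform bound, so a bounded set of \<open>G\<close> meets the embedded grid in a set
  of uniformly bounded extent in every coordinate direction.  A cover by \<open>N = n + 1\<close> colours
  with uniformly bounded, \<open>2N\<close>-disjoint colour classes would thus colour a large grid with \<open>N\<close>
  colours without a monochromatic chain crossing it in the direction of its colour, which
  Kuhn's combinatorial lemma (the discrete Lebesgue covering theorem) forbids.\<close>

abbreviation cantor_space :: "(nat \<Rightarrow> bool) topology" where
  "cantor_space \<equiv> product_topology (\<lambda>_::nat. discrete_topology (UNIV::bool set)) UNIV"

lemma topspace_tau [simp]: "topspace tau = Gsum"
  by (simp add: tau_def)

lemma compact_space_cantor_space: "compact_space cantor_space"
  by (simp add: compact_space_product_topology compact_space_discrete_topology)

lemma coordinate_zero_eq_preimage: "{y. \<not> y k} = {y \<in> topspace cantor_space. y k \<in> {False}}"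
  by auto

lemma openin_coordinate_zero: "openin cantor_space {y. \<not> y k}"
  unfolding coordinate_zero_eq_preimage
  by (rule openin_continuous_map_preimage[OF continuous_map_product_projection]) auto

lemma closedin_coordinate_zero: "closedin cantor_space {y. \<not> y k}"
  unfolding coordinate_zero_eq_preimage
  by (rule closedin_continuous_map_preimage[OF continuous_map_product_projection]) auto

text \<open>Finite supports give every pair a common zero along \<open>t\<close>; compactness of \<open>D \<times> D\<close> bounds
  its position.\<close>

lemma compactin_common_zero:
  fixes t :: "nat \<Rightarrow> nat"
  assumes D: "compactin cantor_space D" "D \<subseteq> Gsum" and t: "inj t"
  obtains K where "\<And>a b. a \<in> D \<Longrightarrow> b \<in> D \<Longrightarrow> \<exists>k\<le>K. \<not> a (t k) \<and> \<not> b (t k)"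
proof -
  let ?U = "\<lambda>k. {y. \<not> y (t k)} \<times> {y. \<not> y (t k)}"
  have "compactin (prod_topology cantor_space cantor_space) (D \<times> D)"
    using D by (simp add: compactin_Times)
  moreover have "openin (prod_topology cantor_space cantor_space) U" if "U \<in> range ?U" for U
    using that openin_coordinate_zero by (auto simp: openin_prod_Times_iff)
  moreover have "D \<times> D \<subseteq> \<Union>(range ?U)"
  proof
    fix z assume "z \<in> D \<times> D"
    then obtain a b where z: "z = (a,b)" "a \<in> Gsum" "b \<in> Gsum" using D by auto
    have "finite (t -` ({i. a i} \<union> {i. b i}))"
      using z t by (intro finite_vimageI) (auto simp: Gsum_def)
    then obtain k where "k \<notin> t -` ({i. a i} \<union> {i. b i})"
      using ex_new_if_finite[OF infinite_UNIV_nat] by blast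
    then show "z \<in> \<Union>(range ?U)" using z by auto
  qed
  ultimately obtain \<F> where \<F>: "finite \<F>" "\<F> \<subseteq> range ?U" "D \<times> D \<subseteq> \<Union>\<F>"
    unfolding compactin_def by meson
  then obtain I where I: "finite I" "\<F> = ?U ` I"
    by (meson finite_subset_image)
  obtain K where K: "I \<subseteq> {..<K}"
    using finite_nat_bounded[OF I(1)] by blast
  show ?thesis
  proof (rule that)
    fix a b assume "a \<in> D" "b \<in> D"
    then obtain k where "k \<in> I" "(a, b) \<in> ?U k"
      using \<F>(3) I(2) by blast
    then show "\<exists>k\<le>K. \<not> a (t k) \<and> \<not> b (t k)"
      using K by (auto intro!: exI[of _ k])
  qed
qed

definition weight_ball :: "nat \<Rightarrow> (nat \<Rightarrow> bool) set" where
  "weight_ball m = {a. finite {i. a i} \<and> card {i. a i} \<le> m}"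

lemma finite_card_le_iff_no_large_subset:
  "finite S \<and> card S \<le> m \<longleftrightarrow> (\<forall>J. finite J \<and> card J = Suc m \<longrightarrow> \<not> J \<subseteq> S)"
proof
  assume S: "finite S \<and> card S \<le> m"
  show "\<forall>J. finite J \<and> card J = Suc m \<longrightarrow> \<not> J \<subseteq> S"
  proof (intro allI impI notI)
    fix J assume "finite J \<and> card J = Suc m" "J \<subseteq> S"
    then show False
      using S card_mono[of S J] by simp
  qed
next
  assume no_subset: "\<forall>J. finite J \<and> card J = Suc m \<longrightarrow> \<not> J \<subseteq> S"
  show "finite S \<and> card S \<le> m"
  proof (rule ccontr)
    assume "\<not> (finite S \<and> card S \<le> m)"
    then obtain J where "J \<subseteq> S" "finite J" "card J = Suc m"
      by (metis infinite_arbitrarily_large not_less_eq_eq obtain_subset_with_card_n)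
    then show False
      using no_subset by blast
  qed
qed

lemma weight_ball_eq_Inter:
  "weight_ball m = (\<Inter>J\<in>{J. finite J \<and> card J = Suc m}. \<Union>j\<in>J. {y. \<not> y j})"
proof (rule set_eqI)
  fix a :: "nat \<Rightarrow> bool"
  have "a \<in> weight_ball m \<longleftrightarrow> (\<forall>J. finite J \<and> card J = Suc m \<longrightarrow> \<not> J \<subseteq> {i. a i})"
    unfolding weight_ball_def by (simp only: mem_Collect_eq finite_card_le_iff_no_large_subset)
  then show "a \<in> weight_ball m \<longleftrightarrow> a \<in> (\<Inter>J\<in>{J. finite J \<and> card J = Suc m}. \<Union>j\<in>J. {y. \<not> y j})"
    by auto
qed

lemma closedin_weight_ball: "closedin cantor_space (weight_ball m)"
  unfolding weight_ball_eq_Inter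
proof (rule closedin_Inter)
  have "{..m} \<in> {J. finite J \<and> card J = Suc m}"
    by simp
  then show "(\<lambda>J. \<Union>j\<in>J. {y. \<not> y j}) ` {J :: nat set. finite J \<and> card J = Suc m} \<noteq> {}"
    by blast
next
  fix S assume "S \<in> (\<lambda>J. \<Union>j\<in>J. {y. \<not> y j}) ` {J :: nat set. finite J \<and> card J = Suc m}"
  then obtain J where "finite J" "S = (\<Union>j\<in>J. {y. \<not> y j})"
    by blast
  then show "closedin cantor_space S"
    by (auto intro: closedin_Union closedin_coordinate_zero)
qed

lemma weight_ball_subset_Gsum: "weight_ball m \<subseteq> Gsum"
  by (auto simp: weight_ball_def Gsum_def)

lemma precompact_weight_ball: "precompact_tau (weight_ball m)"
proof -
  have "closedin tau (weight_ball m)"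
    unfolding tau_def closedin_subtopology using closedin_weight_ball weight_ball_subset_Gsum by blast
  moreover have "compactin tau (weight_ball m)"
    unfolding tau_def compactin_subtopology
    using weight_ball_subset_Gsum closedin_compact_space[OF compact_space_cantor_space closedin_weight_ball]
    by blast
  ultimately show ?thesis
    using weight_ball_subset_Gsum closure_of_eq by (metis precompact_tau_def)
qed

definition weight_entourage :: "nat \<Rightarrow> ((nat \<Rightarrow> bool) \<times> (nat \<Rightarrow> bool)) set" where
  "weight_entourage m = {(x,y). x \<in> Gsum \<and> y \<in> Gsum \<and> x \<in> (\<lambda>a. gadd a y) ` weight_ball m}"

lemma weight_entourage_in_coarse: "weight_entourage m \<in> coarse_C_tau"
  unfolding coarse_C_tau_def weight_entourage_def using precompact_weight_ball by blast

lemma weight_entourageI: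
  assumes "u \<in> Gsum" "v \<in> Gsum" "gadd u v \<in> weight_ball m"
  shows "(u, v) \<in> weight_entourage m"
proof -
  have "u = gadd (gadd u v) v"
    by (auto simp: gadd_def)
  then show ?thesis
    using assms unfolding weight_entourage_def by blast
qed

lemma weight_entourage_refl: "v \<in> Gsum \<Longrightarrow> (v, v) \<in> weight_entourage m"
  by (rule weight_entourageI) (auto simp: gadd_def weight_ball_def)

definition unary_code :: "nat \<Rightarrow> (nat \<Rightarrow> nat) \<Rightarrow> (nat \<Rightarrow> bool)" where
  "unary_code N x = (\<lambda>j. j div N < x (j mod N))"

lemma unary_code_layer: "i < N \<Longrightarrow> unary_code N x (N * k + i) = (k < x i)"
  by (simp add: unary_code_def)

lemma unary_code_in_Gsum:
  assumes "0 < N"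
  shows "unary_code N x \<in> Gsum"
proof -
  have "{j. unary_code N x j} \<subseteq> {..<(\<Sum>i<N. x i) * N}"
  proof
    fix j assume "j \<in> {j. unary_code N x j}"
    moreover have "x (j mod N) \<le> (\<Sum>i<N. x i)"
      using assms by (intro member_le_sum) auto
    ultimately have "j div N < (\<Sum>i<N. x i)"
      by (simp add: unary_code_def)
    then show "j \<in> {..<(\<Sum>i<N. x i) * N}"
      using assms by (simp add: div_less_iff_less_mult)
  qed
  then show ?thesis
    unfolding Gsum_def using finite_subset by blast
qed

definition near :: "nat \<Rightarrow> nat \<Rightarrow> (nat \<Rightarrow> nat) \<Rightarrow> (nat \<Rightarrow> nat) \<Rightarrow> bool" where
  "near N d x y \<longleftrightarrow> (\<forall>i<N. x i \<le> y i + d \<and> y i \<le> x i + d)"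

text \<open>The two codes differ exactly at the layers \<open>k\<close> between \<open>min (x i) (y i)\<close> and
  \<open>max (x i) (y i)\<close>, at most \<open>d\<close> per residue class.\<close>

lemma gadd_unary_code_near:
  assumes N: "0 < N" and near: "near N d x y"
  shows "gadd (unary_code N x) (unary_code N y) \<in> weight_ball (d * N)"
proof -
  let ?D = "{j. gadd (unary_code N x) (unary_code N y) j}"
  let ?g = "\<lambda>(i,e). (min (x i) (y i) + e) * N + i"
  have sub: "?D \<subseteq> ?g ` ({..<N} \<times> {..<d})"
  proof
    fix j assume "j \<in> ?D"
    define i where "i = j mod N"
    define k where "k = j div N"
    have "(k < x i) \<noteq> (k < y i)"
      using \<open>j \<in> ?D\<close> by (simp add: gadd_def unary_code_def i_def k_def)
    moreover have i: "i < N"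
      using N by (simp add: i_def)
    ultimately have "min (x i) (y i) \<le> k" "k < min (x i) (y i) + d"
      using near by (auto simp: near_def)
    then have "j = ?g (i, k - min (x i) (y i))" "(i, k - min (x i) (y i)) \<in> {..<N} \<times> {..<d}"
      using i by (auto simp: i_def k_def)
    then show "j \<in> ?g ` ({..<N} \<times> {..<d})"
      by (rule image_eqI)
  qed
  have "card ?D \<le> card (?g ` ({..<N} \<times> {..<d}))"
    using sub by (intro card_mono) auto
  also have "\<dots> \<le> d * N"
    using card_image_le[of "{..<N} \<times> {..<d}" ?g] by (simp add: card_cartesian_product mult.commute)
  finally show ?thesis
    using finite_subset[OF sub] by (simp add: weight_ball_def)
qed

lemma coarse_entourage_agree_along:
  fixes t :: "nat \<Rightarrow> nat"
  assumes "F \<in> coarse_C_tau" and "inj t"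
  obtains K where "\<And>w u v. (w, u) \<in> F \<Longrightarrow> (w, v) \<in> F \<Longrightarrow> \<exists>k\<le>K. u (t k) = v (t k)"
proof -
  obtain A where A: "precompact_tau A"
    and FA: "F \<subseteq> {(x,y). x \<in> Gsum \<and> y \<in> Gsum \<and> x \<in> (\<lambda>a. gadd a y) ` A}"
    using assms(1) unfolding coarse_C_tau_def by blast
  define D where "D = tau closure_of A"
  have "compactin cantor_space D" "D \<subseteq> Gsum"
    using A unfolding D_def precompact_tau_def tau_def compactin_subtopology by auto
  then obtain K where K: "\<And>a b. a \<in> D \<Longrightarrow> b \<in> D \<Longrightarrow> \<exists>k\<le>K. \<not> a (t k) \<and> \<not> b (t k)"
    using compactin_common_zero assms(2) by blast
  have "A \<subseteq> D"
    unfolding D_def using A by (intro closure_of_subset) (simp add: precompact_tau_def)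
  show ?thesis
  proof (rule that)
    fix w u v assume "(w, u) \<in> F" "(w, v) \<in> F"
    then obtain a b where ab: "a \<in> D" "w = gadd a u" "b \<in> D" "w = gadd b v"
      using FA \<open>A \<subseteq> D\<close> by blast
    then obtain k where k: "k \<le> K" "\<not> a (t k)" "\<not> b (t k)"
      using K by blast
    have "w (t k) = u (t k)"
      using ab(2) k(2) by (simp add: gadd_def)
    moreover have "w (t k) = v (t k)"
      using ab(4) k(3) by (simp add: gadd_def)
    ultimately show "\<exists>k\<le>K. u (t k) = v (t k)"
      using k(1) by auto
  qed
qed

lemma coarse_entourage_bounds_unary_code:
  assumes "F \<in> coarse_C_tau"
  obtains K where "\<And>i w x z. i < N \<Longrightarrow> (w, unary_code N x) \<in> F \<Longrightarrow> (w, unary_code N z) \<in> F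
      \<Longrightarrow> z i \<le> 1 \<Longrightarrow> x i \<le> K + 1"
proof -
  have "\<forall>i\<in>{..<N}. \<exists>Ki. \<forall>w u v. (w, u) \<in> F \<longrightarrow> (w, v) \<in> F \<longrightarrow>
      (\<exists>k\<le>Ki. u (N * Suc k + i) = v (N * Suc k + i))"
  proof
    fix i assume "i \<in> {..<N}"
    then have "0 < N"
      by simp
    then have "inj (\<lambda>k. N * Suc k + i)"
      by (intro injI) simp
    then obtain Ki where "\<And>w u v. (w, u) \<in> F \<Longrightarrow> (w, v) \<in> F \<Longrightarrow>
        \<exists>k\<le>Ki. u (N * Suc k + i) = v (N * Suc k + i)"
      by (rule coarse_entourage_agree_along[OF assms]) blast
    then show "\<exists>Ki. \<forall>w u v. (w, u) \<in> F \<longrightarrow> (w, v) \<in> F \<longrightarrow>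
        (\<exists>k\<le>Ki. u (N * Suc k + i) = v (N * Suc k + i))"
      by blast
  qed
  then obtain Kf where Kf: "\<forall>i\<in>{..<N}. \<forall>w u v. (w, u) \<in> F \<longrightarrow> (w, v) \<in> F \<longrightarrow>
      (\<exists>k\<le>Kf i. u (N * Suc k + i) = v (N * Suc k + i))"
    by (rule bchoice[THEN exE])
  show ?thesis
  proof (rule that)
    fix i w x z assume i: "i < N" and F: "(w, unary_code N x) \<in> F" "(w, unary_code N z) \<in> F"
      and "z i \<le> 1"
    obtain k where k: "k \<le> Kf i"
        "unary_code N x (N * Suc k + i) = unary_code N z (N * Suc k + i)"
      using Kf i F by blast
    from k(2) have "(Suc k < x i) = (Suc k < z i)"
      unfolding unary_code_layer[OF i] .
    then have "\<not> Suc k < x i"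
      using \<open>z i \<le> 1\<close> by simp
    moreover note k(1)
    moreover have "Kf i \<le> (\<Sum>i<N. Kf i)"
      using i by (intro member_le_sum) auto
    ultimately show "x i \<le> (\<Sum>i<N. Kf i) + 1"
      by linarith
  qed
qed

definition in_grid :: "nat \<Rightarrow> nat \<Rightarrow> (nat \<Rightarrow> nat) \<Rightarrow> bool" where
  "in_grid N p x \<longleftrightarrow> (\<forall>i<N. x i \<le> p)"

definition monochrome_step ::
    "nat \<Rightarrow> nat \<Rightarrow> ((nat \<Rightarrow> nat) \<Rightarrow> nat) \<Rightarrow> ((nat \<Rightarrow> nat) \<times> (nat \<Rightarrow> nat)) set" where
  "monochrome_step N p colour =
    {(x,y). in_grid N p x \<and> in_grid N p y \<and> colour x = colour y \<and> near N 2 x y}"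

definition colour_reach ::
    "nat \<Rightarrow> nat \<Rightarrow> ((nat \<Rightarrow> nat) \<Rightarrow> nat) \<Rightarrow> nat \<Rightarrow> (nat \<Rightarrow> nat) set" where
  "colour_reach N p colour i = {x. \<exists>z. in_grid N p z \<and> colour z = i \<and> z i \<le> 1 \<and>
      (z, x) \<in> (monochrome_step N p colour)\<^sup>*}"

lemma rtrancl_invariant:
  assumes "(a, b) \<in> R\<^sup>*" and "\<And>x y. (x, y) \<in> R \<Longrightarrow> f x = f y"
  shows "f a = f b"
  using assms(1) by induction (auto dest: assms(2))

lemma colour_reach_in_grid:
  assumes "x \<in> colour_reach N p colour i"
  shows "in_grid N p x" "colour x = i"
proof -
  obtain z where z: "in_grid N p z" "colour z = i" "(z, x) \<in> (monochrome_step N p colour)\<^sup>*"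
    using assms by (auto simp: colour_reach_def)
  from z(3) show "in_grid N p x"
    by (rule rtranclE) (use z(1) in \<open>auto simp: monochrome_step_def\<close>)
  have "colour z = colour x"
    using z(3) by (rule rtrancl_invariant) (simp add: monochrome_step_def)
  then show "colour x = i"
    using z(2) by simp
qed

lemma colour_reach_extend:
  assumes q: "in_grid N p q" "colour q = j" "j < N" and "near N 1 u q"
    and u: "u j = 0 \<or> (\<exists>w\<in>colour_reach N p colour j. near N 1 u w)"
  shows "q \<in> colour_reach N p colour j"
  using u
proof
  assume "u j = 0"
  then have "q j \<le> 1"
    using \<open>j < N\<close> \<open>near N 1 u q\<close> by (force simp: near_def)
  then show ?thesis
    using q unfolding colour_reach_def by blast
next
  assume "\<exists>w\<in>colour_reach N p colour j. near N 1 u w"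
  then obtain w where w: "w \<in> colour_reach N p colour j" "near N 1 u w"
    by blast
  have "near N 2 w q"
    using w(2) \<open>near N 1 u q\<close> by (fastforce simp: near_def)
  then have "(w, q) \<in> monochrome_step N p colour"
    using colour_reach_in_grid[OF w(1)] q by (simp add: monochrome_step_def)
  then show ?thesis
    using w(1) unfolding colour_reach_def by (blast intro: rtrancl_into_rtrancl)
qed

definition reach_label :: "nat \<Rightarrow> nat \<Rightarrow> ((nat \<Rightarrow> nat) \<Rightarrow> nat) \<Rightarrow> (nat \<Rightarrow> nat) \<Rightarrow> nat \<Rightarrow> nat" where
  "reach_label N p colour x i =
    (if x i = 0 \<or> (\<exists>w\<in>colour_reach N p colour i. near N 1 x w) then 0 else 1)"

text \<open>A vertex labelled 0 in the direction of the colour of the base point \<open>q\<close> of its cell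
  drags \<open>q\<close> into the reach of that colour, and then every vertex of the cell is labelled 0.\<close>

lemma reach_label_cell_eq:
  assumes q: "in_grid N p q" "colour q < N"
    and r: "\<forall>i<N. q i \<le> r i \<and> r i \<le> q i + 1" and s: "\<forall>i<N. q i \<le> s i \<and> s i \<le> q i + 1"
  shows "reach_label N p colour r (colour q) = reach_label N p colour s (colour q)"
proof -
  have near_q: "near N 1 u q" if "\<forall>i<N. q i \<le> u i \<and> u i \<le> q i + 1" for u
    using that by (force simp: near_def)
  have reach_q: "q \<in> colour_reach N p colour (colour q)"
    if u: "\<forall>i<N. q i \<le> u i \<and> u i \<le> q i + 1" and "reach_label N p colour u (colour q) = 0" for u
    using colour_reach_extend[where colour = colour and j = "colour q", OF q(1) refl q(2) near_q[OF u]] \<open>reach_label N p colour u (colour q) = 0\<close>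
    by (simp add: reach_label_def split: if_splits)
  show ?thesis
  proof (cases "q \<in> colour_reach N p colour (colour q)")
    case True
    then show ?thesis
      using near_q[OF r] near_q[OF s] by (auto simp: reach_label_def)
  next
    case False
    then have "reach_label N p colour r (colour q) \<noteq> 0" "reach_label N p colour s (colour q) \<noteq> 0"
      using reach_q[OF r] reach_q[OF s] by blast+
    then show ?thesis
      by (simp add: reach_label_def split: if_splits)
  qed
qed

text \<open>If no chain crosses, the face \<open>x i = p\<close> is labelled 1 in direction \<open>i\<close>, and Kuhn's lemma
  yields a cell whose vertices carry both labels in every direction.\<close>

lemma grid_colouring_crossing:
  assumes p: "0 < p" and colour: "\<And>x. in_grid N p x \<Longrightarrow> colour x < N"
  obtains i z x where "i < N" "in_grid N p z" "z i \<le> 1"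
    "(z, x) \<in> (monochrome_step N p colour)\<^sup>*" "p \<le> x i + 1"
proof (rule ccontr)
  assume "\<not> thesis"
  note crossing = that
  have short: "x i + 2 \<le> p" if x: "x \<in> colour_reach N p colour i" and i: "i < N" for x i
  proof (rule ccontr)
    assume "\<not> x i + 2 \<le> p"
    obtain z where "in_grid N p z" "z i \<le> 1" "(z, x) \<in> (monochrome_step N p colour)\<^sup>*"
      using x by (auto simp: colour_reach_def)
    then have thesis
      using i \<open>\<not> x i + 2 \<le> p\<close> by (intro crossing) auto
    then show False
      using \<open>\<not> thesis\<close> by blast
  qed
  let ?label = "reach_label N p colour"
  have "\<forall>x. (\<forall>i<N. x i \<le> p) \<longrightarrow> (\<forall>i<N. ?label x i = 0 \<or> ?label x i = 1)"
    "\<forall>x. (\<forall>i<N. x i \<le> p) \<longrightarrow> (\<forall>i<N. x i = 0 \<longrightarrow> ?label x i = 0)"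
    by (simp_all add: reach_label_def)
  moreover have "\<forall>x. (\<forall>i<N. x i \<le> p) \<longrightarrow> (\<forall>i<N. x i = p \<longrightarrow> ?label x i = 1)"
  proof (intro allI impI)
    fix x i assume "\<forall>i<N. x i \<le> p" "i < N" "x i = p"
    moreover have "\<not> near N 1 x w" if "w \<in> colour_reach N p colour i" for w
      using short[OF that \<open>i < N\<close>] \<open>i < N\<close> \<open>x i = p\<close> by (auto simp: near_def)
    ultimately show "?label x i = 1"
      using p by (auto simp: reach_label_def)
  qed
  ultimately obtain q where q: "\<forall>i<N. q i < p" and cell: "\<forall>i<N. \<exists>r s.
      (\<forall>j<N. q j \<le> r j \<and> r j \<le> q j + 1) \<and> (\<forall>j<N. q j \<le> s j \<and> s j \<le> q j + 1) \<and> ?label r i \<noteq> ?label s i"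
    by (rule kuhn_lemma[OF p])
  have "in_grid N p q"
    using q by (simp add: in_grid_def less_imp_le)
  moreover from this have "colour q < N"
    by (rule colour)
  ultimately show False
    using cell reach_label_cell_eq by blast
qed

lemma Union_cover_choice:
  assumes "\<Union>\<M> = X"
  obtains f where "\<And>x. x \<in> X \<Longrightarrow> f x \<in> \<M> \<and> x \<in> f x"
proof -
  have "\<forall>x\<in>X. \<exists>M. M \<in> \<M> \<and> x \<in> M"
    using assms by blast
  then obtain f where "\<forall>x\<in>X. f x \<in> \<M> \<and> x \<in> f x"
    by (rule bchoice[THEN exE])
  then show ?thesis
    using that by blast
qed

lemma asdim_leE:
  assumes "asdim_le X Ent n" and "E \<in> Ent"
  obtains F \<M> and c :: "'a set \<Rightarrow> nat" where "F \<in> Ent" "\<Union>\<M> = X"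
    "\<forall>M\<in>\<M>. \<exists>x\<in>X. M \<subseteq> F `` {x}" "\<forall>M\<in>\<M>. c M \<le> n"
    "\<forall>M\<in>\<M>. \<forall>M'\<in>\<M>. M \<noteq> M' \<and> c M = c M' \<longrightarrow> E `` M \<inter> E `` M' = {}"
  using bspec[OF assms(1)[unfolded asdim_le_def] assms(2)]
  by (elim bexE exE conjE) (rule that, assumption+)

lemma unary_code_near_same_class:
  assumes disjoint: "\<forall>M\<in>\<M>. \<forall>M'\<in>\<M>. M \<noteq> M' \<and> c M = c M' \<longrightarrow>
      weight_entourage (d * N) `` M \<inter> weight_entourage (d * N) `` M' = {}"
    and "0 < N" "M \<in> \<M>" "M' \<in> \<M>" "c M = c M'"
    and "unary_code N x \<in> M" "unary_code N y \<in> M'" "near N d x y"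
  shows "M = M'"
proof -
  have "(unary_code N x, unary_code N y) \<in> weight_entourage (d * N)"
    using assms by (intro weight_entourageI unary_code_in_Gsum gadd_unary_code_near)
  moreover have "(unary_code N y, unary_code N y) \<in> weight_entourage (d * N)"
    using assms by (intro weight_entourage_refl unary_code_in_Gsum)
  ultimately show ?thesis
    using assms by blast
qed

lemma asdim_le_grid_pieces:
  assumes "asdim_le Gsum coarse_C_tau n"
  obtains colour :: "(nat \<Rightarrow> nat) \<Rightarrow> nat" and piece :: "(nat \<Rightarrow> nat) \<Rightarrow> (nat \<Rightarrow> bool) set" and K
  where "\<And>x. colour x < Suc n"
    and "\<And>x y. near (Suc n) 2 x y \<Longrightarrow> colour x = colour y \<Longrightarrow> piece x = piece y"
    and "\<And>i x z. i < Suc n \<Longrightarrow> piece x = piece z \<Longrightarrow> z i \<le> 1 \<Longrightarrow> x i \<le> K + 1"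
proof -
  define N where "N = Suc n"
  then have "0 < N"
    by simp
  from assms weight_entourage_in_coarse obtain F \<M> c
    where "F \<in> coarse_C_tau" and cover: "\<Union>\<M> = Gsum"
    and bounded: "\<forall>M\<in>\<M>. \<exists>w\<in>Gsum. M \<subseteq> F `` {w}" and colours: "\<forall>M\<in>\<M>. c M \<le> n"
    and disjoint: "\<forall>M\<in>\<M>. \<forall>M'\<in>\<M>. M \<noteq> M' \<and> c M = c M' \<longrightarrow>
      weight_entourage (2 * N) `` M \<inter> weight_entourage (2 * N) `` M' = {}"
    by (rule asdim_leE)
  obtain K where K: "\<And>i w x z. i < N \<Longrightarrow> (w, unary_code N x) \<in> F \<Longrightarrow> (w, unary_code N z) \<in> F
      \<Longrightarrow> z i \<le> 1 \<Longrightarrow> x i \<le> K + 1"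
    using coarse_entourage_bounds_unary_code[OF \<open>F \<in> coarse_C_tau\<close>, where N = N] by blast
  obtain block where block: "\<And>u. u \<in> Gsum \<Longrightarrow> block u \<in> \<M> \<and> u \<in> block u"
    using Union_cover_choice[OF cover] by blast
  define piece where "piece x = block (unary_code N x)" for x
  have piece: "piece x \<in> \<M>" "unary_code N x \<in> piece x" for x
    using block[OF unary_code_in_Gsum[OF \<open>0 < N\<close>]] by (simp_all add: piece_def)
  show ?thesis
  proof (rule that[of "c \<circ> piece" piece K])
    show "(c \<circ> piece) x < Suc n" for x
      using colours piece by (simp add: less_Suc_eq_le)
    show "piece x = piece y" if "near (Suc n) 2 x y" "(c \<circ> piece) x = (c \<circ> piece) y" for x y
      using that unfolding N_def[symmetric]
      by (intro unary_code_near_same_class[OF disjoint \<open>0 < N\<close> piece(1) piece(1) _ piece(2) piece(2)]) simp_all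
    show "x i \<le> K + 1" if "i < Suc n" "piece x = piece z" "z i \<le> 1" for i x z
    proof -
      obtain w where "piece x \<subseteq> F `` {w}"
        using bounded piece by blast
      then have "(w, unary_code N x) \<in> F" "(w, unary_code N z) \<in> F"
        using piece(2) \<open>piece x = piece z\<close> by blast+
      then show ?thesis
        using K that unfolding N_def by blast
    qed
  qed
qed

theorem mainTheorem11:
  shows "asdim_infinite Gsum coarse_C_tau"
  unfolding asdim_infinite_def
proof (intro allI notI)
  fix n assume "asdim_le Gsum coarse_C_tau n"
  then show False
  proof (rule asdim_le_grid_pieces)
    fix colour piece K assume colour: "\<And>x. colour x < Suc n"
      and near_piece: "\<And>x y. near (Suc n) 2 x y \<Longrightarrow> colour x = colour y \<Longrightarrow> piece x = piece y"
      and piece_bounded: "\<And>i x z. i < Suc n \<Longrightarrow> piece x = piece z \<Longrightarrow> z i \<le> 1 \<Longrightarrow> x i \<le> K + 1"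
    have "0 < K + 3"
      by simp
    then obtain i z x where "i < Suc n" "in_grid (Suc n) (K + 3) z" "z i \<le> 1"
      and chain: "(z, x) \<in> (monochrome_step (Suc n) (K + 3) colour)\<^sup>*" and far: "K + 3 \<le> x i + 1"
      using colour by (rule grid_colouring_crossing)
    have "piece z = piece x"
      using chain by (rule rtrancl_invariant[where f = piece])
        (rule near_piece, simp_all add: monochrome_step_def)
    then have "x i \<le> K + 1"
      using \<open>i < Suc n\<close> \<open>z i \<le> 1\<close> by (intro piece_bounded) simp_all
    then show False
      using far by linarith
  qed
qed

end
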